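(* Let $q$ be a power of $2$ and $n=q^2+1$. For an integer $a$ with $1\le a\le n-1$, $a\in\mathrm{MinRep}_n$ if and only if $a\in[l(q+1)+1,(l+1)(q-1)]$ for some integer $l$ with $0\le l\le\frac q2-1$. Moreover, $|C_a|=4$ for every nonzero $a\in\mathrm{MinRep}_n$.
   Context: For $0\le s\le n-1$, $C_s=\{sq^i\bmod n:i\ge0\}$ is the $q$-cyclotomic coset of $s$ modulo $n$; its least element is its coset leader; $\mathrm{MinRep}_n$ is the set of all coset leaders modulo $n$. $[u,v]$ denotes the set of integers $u,u+1,\dots,v$. *)

theory Defs
  imports Main
begin

definition cyc_coset :: "nat \<Rightarrow> nat \<Rightarrow> nat \<Rightarrow> nat set" where
  "cyc_coset q n s = {s * q ^ i mod n | i. True}"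

definition MinRep :: "nat \<Rightarrow> nat \<Rightarrow> nat set" where
  "MinRep q n = {s. s < n \<and> s = Min (cyc_coset q n s)}"

end

(* Since q^2 = -1 (mod n), the coset of 0 < a < n is {a, b, n - a, n - b} with b = a q mod n.
   It has four elements because n is odd: a q = +-a (mod n) would give, after multiplying by q,
   a q^2 = a, i.e. -a = a.  Writing a = i q + j with 0 <= j < q, one has a q = j q - i (mod n),
   so a is the least element of its coset exactly when i < j and i + j < q, which says that a lies
   in the interval [i (q + 1) + 1, (i + 1) (q - 1)]; evenness of q rules out the boundary case
   q = 2 i + 1 = i + j. *)
theory Submission
  imports Defs "HOL-Number_Theory.Cong"
begin

lemma mult_pow_mod_period:
  fixes n q d :: nat
  assumes "[q ^ d = 1] (mod n)"
  shows "x * q ^ k mod n = x * q ^ (k mod d) mod n"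
proof -
  have "[q ^ (d * (k div d)) = 1] (mod n)"
    using cong_pow[OF assms] by (simp add: power_mult)
  then have "[x * (q ^ (d * (k div d)) * q ^ (k mod d)) = x * (1 * q ^ (k mod d))] (mod n)"
    by (intro cong_mult cong_refl)
  then show ?thesis
    by (simp add: cong_def power_add[symmetric])
qed

lemma mult_square_mod_square_plus_one:
  fixes q n x :: nat
  assumes n: "n = q^2 + 1" and x: "0 < x mod n"
  shows "x * q^2 mod n = n - x mod n"
proof -
  define r where "r = x mod n"
  have "0 < r" "r < n" using x n by (simp_all add: r_def)
  then obtain s where s: "r = Suc s" using not0_implies_Suc by blast
  have "x * q^2 mod n = r * q^2 mod n" by (simp add: r_def mod_mult_left_eq)
  also have "r * q^2 = s * n + (n - r)" using \<open>r < n\<close> unfolding s n by (simp add: algebra_simps)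
  also have "(s * n + (n - r)) mod n = n - r"
    using \<open>0 < r\<close> \<open>r < n\<close> by (simp only: mod_mult_self3) simp
  finally show ?thesis by (simp add: r_def)
qed

lemma coprime_square_plus_one: "coprime (q^2 + 1) (q::nat)"
  by (metis coprime_add_one_left coprime_mult_right_iff power2_eq_square)

lemma mult_pow_mod_pos:
  fixes n q a k :: nat
  assumes "coprime n q" and "0 < a mod n"
  shows "0 < a * q ^ k mod n"
  using assms by (metis coprime_commute coprime_dvd_mult_left_iff coprime_power_right_iff
      dvd_eq_mod_eq_0 gr0I)

lemma pow_four_mod_square_plus_one:
  fixes q :: nat
  shows "[q ^ 4 = 1] (mod q^2 + 1)"
proof (cases "q = 0")
  case False
  then have "q^2 * q^2 mod (q^2 + 1) = 1"
    using mult_square_mod_square_plus_one[of "q^2 + 1" q "q^2"] by simp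
  then show ?thesis using False by (simp add: cong_def power_add[symmetric])
qed simp

lemma mult_pow_mod_square_plus_one:
  fixes q n a :: nat
  assumes n: "n = q^2 + 1" and a: "0 < a" "a < n"
  shows "a * q ^ k mod n = a * q ^ (k mod 4) mod n"
    and "a * q^2 mod n = n - a"
    and "a * q^3 mod n = n - a * q mod n"
proof -
  show "a * q ^ k mod n = a * q ^ (k mod 4) mod n"
    using mult_pow_mod_period pow_four_mod_square_plus_one n by blast
  show "a * q^2 mod n = n - a"
    using mult_square_mod_square_plus_one[OF n] a by simp
  have "0 < a * q mod n"
    using mult_pow_mod_pos[of n q a 1] coprime_square_plus_one n a by simp
  then show "a * q^3 mod n = n - a * q mod n"
    using mult_square_mod_square_plus_one[OF n, of "a * q"]
    by (simp add: power_numeral_reduce mult.assoc)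
qed

lemma cyc_coset_square_plus_one:
  fixes q n a :: nat
  assumes n: "n = q^2 + 1" and a: "0 < a" "a < n"
  shows "cyc_coset q n a = {a, a * q mod n, n - a, n - a * q mod n}"
proof -
  note orbit = mult_pow_mod_square_plus_one[OF n a]
  have "cyc_coset q n a = (\<lambda>k. a * q ^ k mod n) ` {..<4}"
  proof -
    have "a * q ^ k mod n \<in> (\<lambda>k. a * q ^ k mod n) ` {..<4}" for k
      using orbit(1)[of k] by (intro image_eqI[of _ _ "k mod 4"]) simp_all
    then show ?thesis unfolding cyc_coset_def by blast
  qed
  also have "{..<4::nat} = {0, 1, 2, 3}" by auto
  finally show ?thesis using orbit(2,3) a by simp
qed

lemma card_cyc_coset_square_plus_one:
  fixes q n a :: nat
  assumes "even q" and n: "n = q^2 + 1" and a: "0 < a" "a < n"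
  shows "card (cyc_coset q n a) = 4"
proof -
  define b where "b = a * q mod n"
  note orbit = mult_pow_mod_square_plus_one[OF n a]
  have "odd n" using \<open>even q\<close> n by simp
  then have "a + a \<noteq> n" "b + b \<noteq> n" by presburger+
  have "0 < b" "b < n"
    using mult_pow_mod_pos[of n q a 1] coprime_square_plus_one n a by (simp_all add: b_def)
  have step: "x * q ^ Suc k mod n = (x * q ^ k mod n) * q mod n" for x k
    by (metis mod_mult_left_eq mult.assoc power_Suc2)
  have "a \<noteq> b"
  proof
    assume "a = b"
    then have "a * q^2 mod n = a" using step[of a 1] by (simp add: b_def power2_eq_square)
    then show False using orbit(2) \<open>a + a \<noteq> n\<close> a by linarith
  qed
  moreover have "a + b \<noteq> n"
  proof
    assume "a + b = n"
    then have "a * q^3 mod n = a" using orbit(3) by (simp add: b_def)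
    then have "a * q^4 mod n = b" using step[of a 3] by (simp add: b_def)
    moreover have "a * q^4 mod n = a" using orbit(1)[of 4] a by simp
    ultimately show False using \<open>a \<noteq> b\<close> by simp
  qed
  ultimately have "a \<noteq> b" "a \<noteq> n - a" "a \<noteq> n - b" "b \<noteq> n - a" "b \<noteq> n - b" "n - a \<noteq> n - b"
    using \<open>a + a \<noteq> n\<close> \<open>b + b \<noteq> n\<close> \<open>b < n\<close> a by linarith+
  then show ?thesis
    unfolding cyc_coset_square_plus_one[OF n a] b_def[symmetric] by simp
qed

lemma MinRep_square_plus_one_iff:
  fixes q n a :: nat
  assumes n: "n = q^2 + 1" and a: "0 < a" "a < n"
  shows "a \<in> MinRep q n \<longleftrightarrow> a \<le> a * q mod n \<and> a + a * q mod n \<le> n"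
proof -
  have "a \<in> MinRep q n \<longleftrightarrow> Min (cyc_coset q n a) = a"
    using a unfolding MinRep_def by auto
  also have "\<dots> \<longleftrightarrow> a \<le> a * q mod n \<and> a \<le> n - a \<and> a \<le> n - a * q mod n"
    unfolding cyc_coset_square_plus_one[OF n a] by (subst Min_eq_iff) auto
  also have "\<dots> \<longleftrightarrow> a \<le> a * q mod n \<and> a + a * q mod n \<le> n"
    using a by linarith
  finally show ?thesis .
qed

lemma mult_q_mod_square_plus_one_digits:
  fixes q n i j :: nat
  assumes n: "n = q^2 + 1" and "i \<le> q" "0 < j" "j < q"
  shows "(i * q + j) * q mod n = j * q - i"
proof -
  have "q \<le> j * q" using \<open>0 < j\<close> by simp
  then have "i \<le> j * q" using \<open>i \<le> q\<close> by linarith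
  then have "(i * q + j) * q = i * n + (j * q - i)"
    unfolding n by (simp add: algebra_simps power2_eq_square)
  moreover have "j * q < q * q" using \<open>j < q\<close> by simp
  then have "j * q - i < n" unfolding n power2_eq_square by linarith
  ultimately show ?thesis by simp
qed

lemma leader_digits_iff:
  fixes q i j :: nat
  assumes "even q" "i \<le> q" "0 < j" "j < q"
  shows "i * q + j \<le> j * q - i \<and> i * q + j + (j * q - i) \<le> q^2 + 1 \<longleftrightarrow> i < j \<and> i + j < q"
proof -
  have "q \<le> j * q" using \<open>0 < j\<close> by simp
  then have i_le: "i \<le> j * q" using \<open>i \<le> q\<close> by linarith
  have "i * q + j \<le> j * q - i \<longleftrightarrow> i * q + i + j \<le> j * q" using i_le by linarith
  moreover have "i * q + j + (j * q - i) \<le> q^2 + 1 \<longleftrightarrow> (i + j) * q + j \<le> q * q + 1 + i"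
    using i_le by (simp add: algebra_simps power2_eq_square, linarith)
  moreover have "i * q + i + j \<le> j * q \<and> (i + j) * q + j \<le> q * q + 1 + i \<longleftrightarrow> i < j \<and> i + j < q"
  proof
    assume A: "i * q + i + j \<le> j * q \<and> (i + j) * q + j \<le> q * q + 1 + i"
    have "i < j"
    proof (rule ccontr)
      assume "\<not> i < j"
      then have "j * q \<le> i * q" by simp
      then show False using A \<open>0 < j\<close> by linarith
    qed
    moreover have "i + j < q"
    proof (rule ccontr)
      assume "\<not> i + j < q"
      then have "q * q \<le> (i + j) * q" by simp
      then have "j = i + 1" using A \<open>i < j\<close> by (simp add: algebra_simps)
      then have "(2 * i + 1) * q \<le> q * q" "q \<le> 2 * i + 1"
        using A \<open>\<not> i + j < q\<close> by (simp_all add: algebra_simps)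
      moreover have "0 < q" using \<open>j < q\<close> by simp
      ultimately have "q = 2 * i + 1" by (metis le_antisym mult_le_cancel2)
      then show False using \<open>even q\<close> by simp
    qed
    ultimately show "i < j \<and> i + j < q" ..
  next
    assume B: "i < j \<and> i + j < q"
    then have "(i + 1) * q \<le> j * q" "(i + j + 1) * q \<le> q * q"
      by (intro mult_le_mono1, simp)+
    then show "i * q + i + j \<le> j * q \<and> (i + j) * q + j \<le> q * q + 1 + i"
      using B \<open>j < q\<close> by (simp add: algebra_simps)
  qed
  ultimately show ?thesis by blast
qed

lemma block_interval_iff:
  fixes q l i j :: nat
  assumes "j < q"
  shows "l * (q + 1) + 1 \<le> i * q + j \<and> i * q + j \<le> (l + 1) * (q - 1) \<longleftrightarrow> l = i \<and> i < j \<and> i + j < q"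
proof -
  have lower: "k * (q + 1) = k * q + k" for k by (simp add: algebra_simps)
  have upper: "(k + 1) * (q - 1) + (k + 1) = k * q + q" for k
    using \<open>j < q\<close> by (cases q) (simp_all add: algebra_simps)
  show ?thesis
  proof
    assume A: "l * (q + 1) + 1 \<le> i * q + j \<and> i * q + j \<le> (l + 1) * (q - 1)"
    have "l \<le> i"
    proof (rule ccontr)
      assume "\<not> l \<le> i"
      then have "(i + 1) * q \<le> l * q" by (intro mult_le_mono1) simp
      then show False using A lower[of l] \<open>j < q\<close> by (simp add: algebra_simps)
    qed
    moreover have "i \<le> l"
    proof (rule ccontr)
      assume "\<not> i \<le> l"
      then have "(l + 1) * q \<le> i * q" by (intro mult_le_mono1) simp
      then show False using A upper[of l] by (simp add: algebra_simps)
    qed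
    ultimately have "l = i" by simp
    then show "l = i \<and> i < j \<and> i + j < q" using A lower[of i] upper[of i] by simp
  next
    assume B: "l = i \<and> i < j \<and> i + j < q"
    then have "i * (q + 1) + 1 \<le> i * q + j \<and> i * q + j \<le> (i + 1) * (q - 1)"
      using lower[of i] upper[of i] by linarith
    then show "l * (q + 1) + 1 \<le> i * q + j \<and> i * q + j \<le> (l + 1) * (q - 1)"
      using B by simp
  qed
qed

lemma interval_digits_iff:
  fixes q i j :: nat
  assumes "j < q"
  shows "(\<exists>l. l \<le> q div 2 - 1 \<and> l * (q + 1) + 1 \<le> i * q + j \<and> i * q + j \<le> (l + 1) * (q - 1))
    \<longleftrightarrow> i < j \<and> i + j < q"
  using block_interval_iff[OF assms] by fastforce

lemma MinRep_square_plus_one_digits: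
  fixes q n a :: nat
  assumes "even q" and n: "n = q^2 + 1" and a: "0 < a" "a < n"
  shows "a \<in> MinRep q n \<longleftrightarrow> a div q < a mod q \<and> a div q + a mod q < q"
proof -
  define i j where "i = a div q" and "j = a mod q"
  have "q \<noteq> 0" using n a by (cases "q = 0") simp_all
  then have "2 \<le> q" using \<open>even q\<close> by presburger
  have a_eq: "a = i * q + j" by (simp add: i_def j_def)
  have "j < q" using \<open>q \<noteq> 0\<close> by (simp add: j_def)
  have "a \<le> q * q" using a n by (simp add: power2_eq_square)
  then have "i \<le> q" unfolding i_def by (metis div_le_mono nonzero_mult_div_cancel_right \<open>q \<noteq> 0\<close>)
  show ?thesis
  proof (cases "j = 0")
    case True
    then have "0 < i" "i < a" using a a_eq \<open>2 \<le> q\<close> by auto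
    then have "a * q mod n = n - i"
      using mult_square_mod_square_plus_one[OF n, of i] a a_eq True \<open>i < a\<close>
      by (simp add: power2_eq_square mult.assoc)
    then have "\<not> a + a * q mod n \<le> n" using \<open>i < a\<close> a by linarith
    then show ?thesis using MinRep_square_plus_one_iff[OF n a] True by (simp add: j_def)
  next
    case False
    then have "a * q mod n = j * q - i"
      using mult_q_mod_square_plus_one_digits[OF n \<open>i \<le> q\<close> _ \<open>j < q\<close>] a_eq by simp
    moreover have "a \<le> j * q - i \<and> a + (j * q - i) \<le> n \<longleftrightarrow> i < j \<and> i + j < q"
      using leader_digits_iff[OF \<open>even q\<close> \<open>i \<le> q\<close> _ \<open>j < q\<close>] False
      unfolding a_eq n by simp
    ultimately show ?thesis
      using MinRep_square_plus_one_iff[OF n a] by (simp only: i_def j_def)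
  qed
qed

theorem lemma8:
  fixes q m n :: nat
  assumes "m \<ge> 1" and "q = 2 ^ m" and "n = q ^ 2 + 1"
  shows "(\<forall>a. 1 \<le> a \<and> a \<le> n - 1 \<longrightarrow>
            (a \<in> MinRep q n \<longleftrightarrow>
              (\<exists>l::nat. l \<le> q div 2 - 1 \<and> l * (q + 1) + 1 \<le> a \<and> a \<le> (l + 1) * (q - 1))))
       \<and> (\<forall>a \<in> MinRep q n. a \<noteq> 0 \<longrightarrow> card (cyc_coset q n a) = 4)"
proof -
  have "even q" "q \<noteq> 0" using assms(1,2) by simp_all
  have leaders: "a \<in> MinRep q n \<longleftrightarrow>
      (\<exists>l::nat. l \<le> q div 2 - 1 \<and> l * (q + 1) + 1 \<le> a \<and> a \<le> (l + 1) * (q - 1))"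
    if "0 < a" "a < n" for a
  proof -
    have "a = a div q * q + a mod q" by simp
    then show ?thesis
      using MinRep_square_plus_one_digits[OF \<open>even q\<close> assms(3) that]
        interval_digits_iff[of "a mod q" q "a div q"] \<open>q \<noteq> 0\<close> by simp
  qed
  have "0 < a \<and> a < n" if "1 \<le> a \<and> a \<le> n - 1" for a using that assms(3) by auto
  moreover have "a < n" if "a \<in> MinRep q n" for a using that by (simp add: MinRep_def)
  ultimately show ?thesis
    using leaders card_cyc_coset_square_plus_one[OF \<open>even q\<close> assms(3)] by blast
qed

end
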